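(* Let $d\in\mathbb{N}$ and let $\mathcal{P}$ be a partition of $\mathbb{R}^{d}$. Suppose there exists $D\in(0,\infty)$ such that $D$ is a strict pairwise bound for every $X\in\mathcal{P}$, and suppose there exists $\vec{\alpha}\in\mathbb{R}^{d}$ such that $\vec{\alpha}+[0,D]^{d}$ intersects only finitely many members of $\mathcal{P}$. Then there exists $\vec{p}\in\mathbb{R}^{d}$ such that $|\mathcal{N}_{\overline{0}}(\vec{p})|\geq d+1$. Furthermore, $\mathcal{P}$ contains a $(d+1)$-clique.
   Context: On $\mathbb{R}^d$ use $d_{max}(\vec{x},\vec{y})=\max_i|x_i-y_i|$. $D$ is a strict pairwise bound for a set $X$ if $d_{max}(\vec{x},\vec{y})<D$ for all $\vec{x},\vec{y}\in X$. For $\vec{p}\in\mathbb{R}^d$, $\mathcal{N}_{\overline{0}}(\vec{p})=\{X\in\mathcal{P}:\vec{p}\in\overline{X}\}$ ($\overline{X}$ the closure). Members $X,Y$ are adjacent if $\overline{X}\cap\overline{Y}\ne\emptyset$; an $n$-clique is a set of $n$ distinct pairwise adjacent members. *)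

theory Defs
  imports "HOL-Analysis.Analysis"
begin

definition dmax :: "real^'n \<Rightarrow> real^'n \<Rightarrow> real" where
  "dmax x y = Max (range (\<lambda>i. \<bar>x $ i - y $ i\<bar>))"

definition strict_pairwise_bound :: "real \<Rightarrow> (real^'n) set \<Rightarrow> bool" where
  "strict_pairwise_bound D X \<longleftrightarrow> (\<forall>x\<in>X. \<forall>y\<in>X. dmax x y < D)"

definition is_partition :: "(real^'n) set set \<Rightarrow> bool" where
  "is_partition P \<longleftrightarrow> (\<forall>X\<in>P. X \<noteq> {}) \<and>
     (\<forall>X\<in>P. \<forall>Y\<in>P. X \<noteq> Y \<longrightarrow> X \<inter> Y = {}) \<and> \<Union>P = UNIV"

definition cube_at :: "real^'n \<Rightarrow> real \<Rightarrow> (real^'n) set" where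
  "cube_at \<alpha> D = {\<alpha> + v | v. \<forall>i. 0 \<le> v $ i \<and> v $ i \<le> D}"

definition closed_nbhd :: "(real^'n) set set \<Rightarrow> real^'n \<Rightarrow> (real^'n) set set" where
  "closed_nbhd P p = {X\<in>P. p \<in> closure X}"

definition adjacent :: "(real^'n) set \<Rightarrow> (real^'n) set \<Rightarrow> bool" where
  "adjacent X Y \<longleftrightarrow> closure X \<inter> closure Y \<noteq> {}"

definition is_clique :: "(real^'n) set set \<Rightarrow> nat \<Rightarrow> (real^'n) set set \<Rightarrow> bool" where
  "is_clique P n C \<longleftrightarrow> C \<subseteq> P \<and> finite C \<and> card C = n \<and>
     (\<forall>X\<in>C. \<forall>Y\<in>C. adjacent X Y)"

end

theory Submission
  imports Defs
begin

(* Subdivide the cube alpha + [0,D]^d into a grid of mesh D/p and label each grid point by the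
   member of P containing it, recording for every coordinate whether that member touches the
   lower face in that coordinate.  A member touching a lower face cannot reach the opposite face,
   so Kuhn's combinatorial Sperner lemma yields a grid cell whose d+1 vertices lie in d+1 distinct
   members.  Only finitely many members meet the cube, so one (d+1)-set of members occurs for
   arbitrarily fine meshes, and compactness of the cube gives a point in all their closures. *)

lemma mem_cube_at_iff: "y \<in> cube_at \<alpha> D \<longleftrightarrow> (\<forall>i. \<alpha>$i \<le> y$i \<and> y$i \<le> \<alpha>$i + D)"
proof
  assume "\<forall>i. \<alpha>$i \<le> y$i \<and> y$i \<le> \<alpha>$i + D"
  then show "y \<in> cube_at \<alpha> D"
    unfolding cube_at_def by (intro CollectI exI[of _ "y - \<alpha>"]) (auto simp: algebra_simps)
qed (auto simp: cube_at_def)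

lemma cube_at_eq_cbox: "cube_at \<alpha> D = cbox \<alpha> (\<chi> i. \<alpha>$i + D)"
  by (auto simp: mem_cube_at_iff mem_box_cart)

lemma strict_pairwise_bound_component:
  assumes "strict_pairwise_bound D X" "x \<in> X" "y \<in> X"
  shows "\<bar>x$i - y$i\<bar> < D"
proof -
  have "\<bar>x$i - y$i\<bar> \<le> dmax x y"
    unfolding dmax_def by (rule Max_ge) auto
  also have "\<dots> < D"
    using assms unfolding strict_pairwise_bound_def by blast
  finally show ?thesis .
qed

lemma dist_le_card_mult_component_bound:
  fixes x y :: "real^'n" and r :: real
  assumes "\<And>i. \<bar>x$i - y$i\<bar> \<le> r"
  shows "dist x y \<le> CARD('n) * r"
proof -
  have "dist x y \<le> (\<Sum>i\<in>UNIV. \<bar>(x - y)$i\<bar>)"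
    unfolding dist_norm by (rule norm_le_l1_cart)
  also have "\<dots> \<le> CARD('n) * r"
    using sum_bounded_above[of UNIV "\<lambda>i. \<bar>(x - y)$i\<bar>" r] assms by simp
  finally show ?thesis .
qed

lemma kuhn_fully_labelled_cell:
  fixes lab :: "(nat \<Rightarrow> nat) \<Rightarrow> nat \<Rightarrow> nat"
  assumes "0 < p"
    and "\<forall>x j. (\<forall>j. x j \<le> p) \<and> j < n \<and> x j = 0 \<longrightarrow> lab x j = 0"
    and "\<forall>x j. (\<forall>j. x j \<le> p) \<and> j < n \<and> x j = p \<longrightarrow> lab x j = 1"
  obtains s b where "card s = Suc n" "inj_on lab s"
    and "\<And>a j. a \<in> s \<Longrightarrow> b j \<le> a j \<and> a j \<le> Suc (b j) \<and> a j \<le> p"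
proof -
  have "odd (card {s. ksimplex p n s \<and> (reduced n \<circ> lab) ` s = {..n}})"
    using kuhn_combinatorial[OF assms] .
  then obtain s where ks: "ksimplex p n s" and full: "(reduced n \<circ> lab) ` s = {..n}"
    by (metis (mono_tags, lifting) Collect_empty_eq card.empty even_zero)
  then obtain b u where "kuhn_simplex p n b u s"
    by (auto elim: ksimplex.cases)
  then interpret kuhn_simplex p n b u s .
  have card_s: "card s = Suc n"
    by (rule ksimplex_card[OF ks])
  then have fin: "finite s"
    using card.infinite by fastforce
  have "inj_on (reduced n \<circ> lab) s"
    using fin by (rule eq_card_imp_inj_on) (simp only: full card_s card_atMost)
  then have "inj_on lab s"
    by (rule inj_on_imageI2)
  with that card_s show ?thesis
    using base_le le_Suc_base s_le_p by blast
qed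

definition grid_point :: "real^'n \<Rightarrow> real \<Rightarrow> nat \<Rightarrow> ('n \<Rightarrow> nat) \<Rightarrow> (nat \<Rightarrow> nat) \<Rightarrow> real^'n"
  where "grid_point \<alpha> D p k x = (\<chi> i. \<alpha>$i + D / p * x (k i))"

lemma grid_point_in_cube:
  assumes "0 \<le> D" "\<And>j. x j \<le> p"
  shows "grid_point \<alpha> D p k x \<in> cube_at \<alpha> D"
  unfolding mem_cube_at_iff
proof
  fix i
  have "D / p * x (k i) \<le> D / p * p"
    using assms by (intro mult_left_mono) auto
  also have "\<dots> \<le> D"
    using assms(1) by (cases "p = 0") auto
  finally show "\<alpha>$i \<le> grid_point \<alpha> D p k x $ i \<and> grid_point \<alpha> D p k x $ i \<le> \<alpha>$i + D"
    using assms(1) by (simp add: grid_point_def)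
qed

lemma grid_point_component_close:
  assumes "0 \<le> D" "b (k i) \<le> a (k i)" "a (k i) \<le> Suc (b (k i))"
  shows "\<bar>grid_point \<alpha> D p k a $ i - grid_point \<alpha> D p k b $ i\<bar> \<le> D / p"
proof -
  define t where "t = real (a (k i)) - b (k i)"
  have "grid_point \<alpha> D p k a $ i - grid_point \<alpha> D p k b $ i = D / p * t"
    by (simp add: grid_point_def t_def algebra_simps)
  moreover have "0 \<le> t" "t \<le> 1"
    using assms(2,3) by (auto simp: t_def)
  moreover have "0 \<le> D / p"
    using assms(1) by simp
  ultimately show ?thesis
    by (metis abs_of_nonneg mult_left_le mult_nonneg_nonneg)
qed

lemma cover_kuhn_cell:
  fixes M :: "real^'n \<Rightarrow> (real^'n) set" and h :: "nat \<Rightarrow> 'n"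
  assumes "\<And>y. y \<in> M y" "\<And>y. strict_pairwise_bound D (M y)" "0 < p"
    and k_h: "\<And>j. j < CARD('n) \<Longrightarrow> k (h j) = j"
  obtains s b where "card s = Suc CARD('n)" "inj_on (M \<circ> grid_point \<alpha> D p k) s"
    and "\<And>a j. a \<in> s \<Longrightarrow> b j \<le> a j \<and> a j \<le> Suc (b j) \<and> a j \<le> p"
proof -
  define g where "g = grid_point \<alpha> D p k"
  have g_h: "g x $ h j = \<alpha>$h j + D / p * x j" if "j < CARD('n)" for x j
    using k_h[OF that] by (simp add: g_def grid_point_def)
  define L where "L X j = (if \<exists>y\<in>X. y $ h j = \<alpha> $ h j then 0 else 1 :: nat)" for X j
  define lab where "lab = L \<circ> (M \<circ> g)"
  have lab_0: "\<forall>x j. (\<forall>j. x j \<le> p) \<and> j < CARD('n) \<and> x j = 0 \<longrightarrow> lab x j = 0"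
  proof (intro allI impI)
    fix x j assume "(\<forall>j. x j \<le> p) \<and> j < CARD('n) \<and> x j = 0"
    then have "g x $ h j = \<alpha> $ h j"
      using g_h by simp
    then show "lab x j = 0"
      using assms(1) by (auto simp: lab_def L_def)
  qed
  have lab_p: "\<forall>x j. (\<forall>j. x j \<le> p) \<and> j < CARD('n) \<and> x j = p \<longrightarrow> lab x j = 1"
  proof (intro allI impI)
    fix x j assume "(\<forall>j. x j \<le> p) \<and> j < CARD('n) \<and> x j = p"
    then have "g x $ h j = \<alpha> $ h j + D"
      using g_h \<open>0 < p\<close> by simp
    moreover have "\<bar>y $ h j - g x $ h j\<bar> < D" if "y \<in> M (g x)" for y
      using strict_pairwise_bound_component assms(1,2) that by blast
    ultimately have "\<not> (\<exists>y\<in>M (g x). y $ h j = \<alpha> $ h j)"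
      by force
    then show "lab x j = 1"
      by (simp add: lab_def L_def)
  qed
  obtain s b where "card s = Suc CARD('n)" "inj_on lab s"
    and "\<And>a j. a \<in> s \<Longrightarrow> b j \<le> a j \<and> a j \<le> Suc (b j) \<and> a j \<le> p"
    using kuhn_fully_labelled_cell[OF \<open>0 < p\<close> lab_0 lab_p] by blast
  moreover have "inj_on (M \<circ> g) s"
    using \<open>inj_on lab s\<close> unfolding lab_def by (rule inj_on_imageI2)
  ultimately show ?thesis
    using that unfolding g_def by blast
qed

lemma cover_cluster_in_cube:
  fixes P :: "(real^'n) set set" and p :: nat
  assumes cover: "\<Union>P = UNIV" and "0 < D" and bound: "\<forall>X\<in>P. strict_pairwise_bound D X"
    and "0 < p"
  obtains S c where "S \<subseteq> {X\<in>P. X \<inter> cube_at \<alpha> D \<noteq> {}}" "card S = CARD('n) + 1"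
    and "c \<in> cube_at \<alpha> D" "\<And>X. X \<in> S \<Longrightarrow> \<exists>y\<in>X. dist y c \<le> CARD('n) * (D / p)"
proof -
  obtain h :: "nat \<Rightarrow> 'n" where "bij_betw h {..<CARD('n)} UNIV"
    using ex_bij_betw_nat_finite[of "UNIV :: 'n set"] by (auto simp: atLeast0LessThan)
  define k where "k = inv_into {..<CARD('n)} h"
  have "\<And>j. j < CARD('n) \<Longrightarrow> k (h j) = j"
    using bij_betw_inv_into_left[OF \<open>bij_betw h {..<CARD('n)} UNIV\<close>] by (simp add: k_def)
  define M where "M y = (SOME X. X \<in> P \<and> y \<in> X)" for y
  have M: "M y \<in> P \<and> y \<in> M y" for y
    unfolding M_def by (rule someI_ex) (use cover in blast)
  define g where "g = grid_point \<alpha> D p k"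
  obtain s b where "card s = Suc CARD('n)" "inj_on (M \<circ> g) s"
    and cell: "\<And>a j. a \<in> s \<Longrightarrow> b j \<le> a j \<and> a j \<le> Suc (b j) \<and> a j \<le> p"
    using cover_kuhn_cell[of M D p k h \<alpha>] M bound \<open>0 < p\<close> \<open>\<And>j. j < CARD('n) \<Longrightarrow> k (h j) = j\<close>
    unfolding g_def by blast
  define S where "S = (M \<circ> g) ` s"
  have "card S = CARD('n) + 1"
    using \<open>card s = Suc CARD('n)\<close> \<open>inj_on (M \<circ> g) s\<close> unfolding S_def by (subst card_image) auto
  moreover have "S \<subseteq> {X\<in>P. X \<inter> cube_at \<alpha> D \<noteq> {}}"
  proof
    fix X assume "X \<in> S"
    then obtain a where "a \<in> s" "X = M (g a)"
      by (auto simp: S_def)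
    moreover have "g a \<in> cube_at \<alpha> D"
      unfolding g_def using cell[OF \<open>a \<in> s\<close>] \<open>0 < D\<close> by (intro grid_point_in_cube) auto
    ultimately show "X \<in> {X\<in>P. X \<inter> cube_at \<alpha> D \<noteq> {}}"
      using M by blast
  qed
  moreover have "g b \<in> cube_at \<alpha> D"
  proof -
    obtain a where "a \<in> s"
      using \<open>card s = Suc CARD('n)\<close> by fastforce
    show ?thesis
      unfolding g_def
    proof (rule grid_point_in_cube)
      show "b j \<le> p" for j
        using cell[OF \<open>a \<in> s\<close>, of j] by linarith
    qed (use \<open>0 < D\<close> in simp)
  qed
  moreover have "\<exists>y\<in>X. dist y (g b) \<le> CARD('n) * (D / p)" if "X \<in> S" for X
  proof -
    obtain a where "a \<in> s" "X = M (g a)"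
      using \<open>X \<in> S\<close> by (auto simp: S_def)
    have "\<bar>g a $ i - g b $ i\<bar> \<le> D / p" for i
      unfolding g_def using cell[OF \<open>a \<in> s\<close>, of "k i"] \<open>0 < D\<close>
      by (intro grid_point_component_close) auto
    then show ?thesis
      using M \<open>X = M (g a)\<close> dist_le_card_mult_component_bound by blast
  qed
  ultimately show ?thesis
    using that by blast
qed

lemma cover_cluster_within:
  fixes P :: "(real^'n) set set"
  assumes "\<Union>P = UNIV" and "0 < D" and "\<forall>X\<in>P. strict_pairwise_bound D X" and "0 < e"
  obtains S c where "S \<subseteq> {X\<in>P. X \<inter> cube_at \<alpha> D \<noteq> {}}" "card S = CARD('n) + 1"
    and "c \<in> cube_at \<alpha> D" "\<forall>X\<in>S. \<exists>y\<in>X. dist y c \<le> e"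
proof -
  obtain p :: nat where p: "CARD('n) * D / e < p"
    using reals_Archimedean2 by blast
  moreover have "0 < CARD('n) * D / e"
    using \<open>0 < D\<close> \<open>0 < e\<close> by simp
  ultimately have "0 < p"
    by linarith
  then have "CARD('n) * (D / p) \<le> e"
    using p \<open>0 < e\<close> by (simp add: field_simps)
  obtain S c where S: "S \<subseteq> {X\<in>P. X \<inter> cube_at \<alpha> D \<noteq> {}}" "card S = CARD('n) + 1"
    "c \<in> cube_at \<alpha> D" and near: "\<And>X. X \<in> S \<Longrightarrow> \<exists>y\<in>X. dist y c \<le> CARD('n) * (D / p)"
    using cover_cluster_in_cube[OF assms(1-3) \<open>0 < p\<close>] by blast
  have "\<forall>X\<in>S. \<exists>y\<in>X. dist y c \<le> e"
    using near \<open>CARD('n) * (D / p) \<le> e\<close> by (meson order_trans)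
  with S show ?thesis
    by (rule that)
qed

lemma compact_common_closure_point:
  fixes K :: "'a::metric_space set"
  assumes "compact K" "finite S"
    and near: "\<And>e. 0 < e \<Longrightarrow> \<exists>c\<in>K. \<forall>X\<in>S. \<exists>y\<in>X. dist y c \<le> e"
  shows "\<exists>q\<in>K. \<forall>X\<in>S. q \<in> closure X"
proof -
  define g where "g c = (\<Sum>X\<in>S. infdist c X)" for c
  obtain c1 where "c1 \<in> K" and ne: "\<forall>X\<in>S. X \<noteq> {}"
    using near[of 1] by fastforce
  have "continuous_on K g"
    unfolding g_def by (intro continuous_intros)
  then obtain q where "q \<in> K" and q_min: "\<And>c. c \<in> K \<Longrightarrow> g q \<le> g c"
    using continuous_attains_inf[OF \<open>compact K\<close>] \<open>c1 \<in> K\<close> by blast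
  have "g q = 0"
  proof (rule ccontr)
    assume "g q \<noteq> 0"
    then have pos: "0 < g q"
      unfolding g_def by (simp add: infdist_nonneg sum_nonneg order_less_le)
    define e where "e = g q / (card S + 1)"
    have "0 < e"
      using pos by (simp add: e_def)
    then obtain c where "c \<in> K" and c: "\<forall>X\<in>S. \<exists>y\<in>X. dist y c \<le> e"
      using near by blast
    have "g c \<le> card S * e"
      unfolding g_def
    proof (rule sum_bounded_above)
      fix X assume "X \<in> S"
      then obtain y where "y \<in> X" "dist y c \<le> e"
        using c by blast
      then show "infdist c X \<le> e"
        by (metis dist_commute infdist_le order_trans)
    qed
    also have "\<dots> < g q"
      using pos by (simp add: e_def field_simps)
    finally show False
      using q_min[OF \<open>c \<in> K\<close>] by simp
  qed
  then have "\<forall>X\<in>S. infdist q X = 0"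
    unfolding g_def using \<open>finite S\<close> by (simp add: sum_nonneg_eq_0_iff infdist_nonneg)
  then show ?thesis
    using \<open>q \<in> K\<close> ne in_closure_iff_infdist_zero by blast
qed

lemma finite_witness_for_all_pos:
  fixes Q :: "'a \<Rightarrow> real \<Rightarrow> bool"
  assumes "finite A"
    and ex: "\<And>e. 0 < e \<Longrightarrow> \<exists>x\<in>A. Q x e"
    and mono: "\<And>x e e'. Q x e \<Longrightarrow> e \<le> e' \<Longrightarrow> Q x e'"
  shows "\<exists>x\<in>A. \<forall>e>0. Q x e"
proof (rule ccontr)
  assume "\<not> ?thesis"
  then obtain E where E: "\<And>x. x \<in> A \<Longrightarrow> 0 < E x \<and> \<not> Q x (E x)"
    by metis
  obtain x where "x \<in> A"
    using ex[of 1] by auto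
  then have "0 < Min (E ` A)"
    using \<open>finite A\<close> E by (subst Min_gr_iff) auto
  then obtain x where "x \<in> A" "Q x (Min (E ` A))"
    using ex by blast
  then have "Q x (E x)"
    using mono \<open>finite A\<close> by simp
  with E \<open>x \<in> A\<close> show False
    by blast
qed

lemma finite_family_common_closure_point:
  fixes K :: "'a::metric_space set"
  assumes "compact K" "finite F" "\<forall>S\<in>F. finite S"
    and "\<And>e. 0 < e \<Longrightarrow> \<exists>S\<in>F. \<exists>c\<in>K. \<forall>X\<in>S. \<exists>y\<in>X. dist y c \<le> e"
  shows "\<exists>S\<in>F. \<exists>q\<in>K. \<forall>X\<in>S. q \<in> closure X"
proof -
  have "\<exists>c\<in>K. \<forall>X\<in>S. \<exists>y\<in>X. dist y c \<le> e'"
    if "\<exists>c\<in>K. \<forall>X\<in>S. \<exists>y\<in>X. dist y c \<le> e" "e \<le> e'" for S e e'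
    using that by (meson order_trans)
  with assms(2,4) have "\<exists>S\<in>F. \<forall>e>0. \<exists>c\<in>K. \<forall>X\<in>S. \<exists>y\<in>X. dist y c \<le> e"
    by (rule finite_witness_for_all_pos)
  then obtain S where "S \<in> F" and near: "\<forall>e>0. \<exists>c\<in>K. \<forall>X\<in>S. \<exists>y\<in>X. dist y c \<le> e"
    by blast
  have "\<exists>q\<in>K. \<forall>X\<in>S. q \<in> closure X"
    using \<open>compact K\<close> by (rule compact_common_closure_point) (use assms(3) \<open>S \<in> F\<close> near in auto)
  with \<open>S \<in> F\<close> show ?thesis
    by blast
qed

theorem mainTheorem5:
  fixes P :: "(real^'n) set set"
  assumes "is_partition P"
    and "0 < D"
    and "\<forall>X\<in>P. strict_pairwise_bound D X"
    and "finite {X\<in>P. X \<inter> cube_at \<alpha> D \<noteq> {}}"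
  shows "(\<exists>p. infinite (closed_nbhd P p) \<or> card (closed_nbhd P p) \<ge> CARD('n) + 1)
         \<and> (\<exists>C. is_clique P (CARD('n) + 1) C)"
proof -
  define Fam where "Fam = {S. S \<subseteq> {X\<in>P. X \<inter> cube_at \<alpha> D \<noteq> {}} \<and> card S = CARD('n) + 1}"
  have "compact (cube_at \<alpha> D)"
    by (simp add: cube_at_eq_cbox)
  moreover have "finite Fam"
    using assms(4) unfolding Fam_def by (auto intro: rev_finite_subset[of "Pow _"])
  moreover have "\<forall>S\<in>Fam. finite S"
    by (auto simp: Fam_def intro: card_ge_0_finite)
  moreover have "\<exists>S\<in>Fam. \<exists>c\<in>cube_at \<alpha> D. \<forall>X\<in>S. \<exists>y\<in>X. dist y c \<le> e" if "0 < e" for e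
  proof -
    have "\<Union>P = UNIV"
      using assms(1) by (simp add: is_partition_def)
    then obtain S c where "S \<subseteq> {X\<in>P. X \<inter> cube_at \<alpha> D \<noteq> {}}" "card S = CARD('n) + 1"
      "c \<in> cube_at \<alpha> D" "\<forall>X\<in>S. \<exists>y\<in>X. dist y c \<le> e"
      by (rule cover_cluster_within[OF _ assms(2,3) \<open>0 < e\<close>])
    then show ?thesis
      unfolding Fam_def by blast
  qed
  ultimately have "\<exists>S\<in>Fam. \<exists>q\<in>cube_at \<alpha> D. \<forall>X\<in>S. q \<in> closure X"
    by (rule finite_family_common_closure_point)
  then obtain S q where "S \<in> Fam" and q: "\<forall>X\<in>S. q \<in> closure X"
    by blast
  then have "S \<subseteq> closed_nbhd P q" "card S = CARD('n) + 1" "finite S" "S \<subseteq> P"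
    by (auto simp: Fam_def closed_nbhd_def intro: card_ge_0_finite)
  then have "infinite (closed_nbhd P q) \<or> card (closed_nbhd P q) \<ge> CARD('n) + 1"
    using card_mono[of "closed_nbhd P q" S] by auto
  moreover have "is_clique P (CARD('n) + 1) S"
    unfolding is_clique_def adjacent_def using \<open>card S = _\<close> \<open>finite S\<close> \<open>S \<subseteq> P\<close> q by blast
  ultimately show ?thesis
    by blast
qed

end
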